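(* Let $F$ be any field, $N\in\mathbb{N}$, and $p,p'\in\mathbb{N}$ with $p+p'\le N+1$. If $x\in F^{N+1}$ satisfies $\operatorname{rank}(H_{p,p'-1}(x))>p$, then $\operatorname{rank}(H_{p-1,p'}(x))=p$.
   Context: $\mathbb{N}=\{0,1,2,\ldots\}$. For $N\in\mathbb{N}$, $x=(x_0,\ldots,x_N)\in F^{N+1}$ and integers $s,t\ge -1$ with $s+t\le N$, the Hankel matrix $H_{s,t}(x)$ is the $(s+1)\times(t+1)$ matrix $(x_{i+j})_{0\le i\le s,\,0\le j\le t}$ (a matrix with zero rows or columns has rank $0$). *)

theory Defs
  imports "Jordan_Normal_Form.DL_Rank"
begin

text \<open>Hankel matrix H_{s,t}(x) with s+1 rows and t+1 columns, entries x(i+j).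
  Here it is parametrised by the numbers of rows and columns (r = s+1, c = t+1),
  so that s,t = -1 corresponds to r,c = 0.  The vector x in F^(N+1) is a function
  nat => 'a; only x 0 .. x N are used when r + c - 2 <= N.\<close>
definition hankel :: "nat \<Rightarrow> nat \<Rightarrow> (nat \<Rightarrow> 'a) \<Rightarrow> 'a mat" where
  "hankel r c x = mat r c (\<lambda>(i,j). x (i + j))"

definition hrank :: "nat \<Rightarrow> 'a::field mat \<Rightarrow> nat" where
  "hrank r A = vec_space.rank r A"

end

theory Submission
  imports Defs
begin

text \<open>Write A = H(p, p'-1) and B = H(p-1, p'). The first p rows of A are the first p' columns
  of B. If rank A > p then A has full row rank p+1, so every vector of F^(p+1) is hit by A;
  truncating to the first p coordinates, every vector of F^p is hit by B applied to a zero-padded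
  vector.\<close>

context vec_space
begin

lemma maximal_indpt_cols_exists:
  obtains S where "maximal S (\<lambda>T. T \<subseteq> set (cols A) \<and> lin_indpt T)"
  using maximal_exists[of "\<lambda>T. T \<subseteq> set (cols A) \<and> lin_indpt T" "card (set (cols A))" "{}"]
  by (meson List.finite_set card_mono empty_iff empty_subsetI finite_lin_indpt2 rev_finite_subset)

lemma col_space_full_if_rank_ge:
  assumes A: "A \<in> carrier_mat n nc" and rank: "n \<le> rank A"
  shows "col_space A = carrier_vec n"
proof -
  obtain S where S: "maximal S (\<lambda>T. T \<subseteq> set (cols A) \<and> lin_indpt T)"
    by (rule maximal_indpt_cols_exists)
  have cols: "set (cols A) \<subseteq> carrier_vec n"
    using A cols_dim by (metis carrier_matD(1))
  have S_cols: "S \<subseteq> set (cols A)" and li: "lin_indpt S"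
    using S unfolding maximal_def by blast+
  have S_carrier: "S \<subseteq> carrier_vec n" using S_cols cols by blast
  have "dim \<le> card S" using rank_card_indpt[OF A S] rank dim_is_n by simp
  then have "basis S"
    using dim_li_is_basis[OF fin_dim _ S_carrier li] S_cols finite_subset by blast
  then have "carrier_vec n \<subseteq> span S" unfolding basis_def by simp
  also have "\<dots> \<subseteq> col_space A" unfolding col_space_def by (rule span_is_monotone[OF S_cols])
  finally show ?thesis
    using span_is_subset2[OF cols] unfolding col_space_def by auto
qed

lemma rank_eq_if_col_space_full:
  assumes "col_space A = carrier_vec n"
  shows "rank A = n"
proof -
  have "span_vs (set (cols A)) = V" using assms unfolding col_space_def by simp
  then show ?thesis unfolding rank_def using dim_is_n by simp
qed

lemma mult_mat_vec_surj_if_rank_ge: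
  assumes A: "A \<in> carrier_mat n nc" and "n \<le> rank A" and v: "v \<in> carrier_vec n"
  obtains c where "c \<in> carrier_vec nc" and "A *\<^sub>v c = v"
  using col_space_full_if_rank_ge[OF assms(1,2)] col_space_eq[OF A] A v by auto

lemma rank_eq_if_mult_mat_vec_surj:
  assumes A: "A \<in> carrier_mat n nc"
    and surj: "\<And>v. v \<in> carrier_vec n \<Longrightarrow> \<exists>c \<in> carrier_vec nc. A *\<^sub>v c = v"
  shows "rank A = n"
proof (rule rank_eq_if_col_space_full)
  show "col_space A = carrier_vec n"
    using col_space_eq[OF A] A surj by auto
qed

end

lemma hankel_mult_zero_padded:
  assumes c: "c \<in> carrier_vec c'"
  shows "hankel r (c' + 1) x *\<^sub>v (c @\<^sub>v 0\<^sub>v 1) = vec_first (hankel (r + 1) c' x *\<^sub>v c) r"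
proof (rule eq_vecI)
  fix i assume "i < dim_vec (vec_first (hankel (r + 1) c' x *\<^sub>v c) r)"
  then have i: "i < r" by simp
  have "(hankel r (c' + 1) x *\<^sub>v (c @\<^sub>v 0\<^sub>v 1)) $ i = (\<Sum>j<c' + 1. x (i + j) * (c @\<^sub>v 0\<^sub>v 1) $ j)"
    using i c by (simp add: hankel_def scalar_prod_def lessThan_atLeast0)
  also have "\<dots> = (\<Sum>j<c'. x (i + j) * c $ j)"
    using c by simp
  also have "\<dots> = (hankel (r + 1) c' x *\<^sub>v c) $ i"
    using i c by (simp add: hankel_def scalar_prod_def lessThan_atLeast0)
  finally show "(hankel r (c' + 1) x *\<^sub>v (c @\<^sub>v 0\<^sub>v 1)) $ i = vec_first (hankel (r + 1) c' x *\<^sub>v c) r $ i"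
    using i by (simp add: vec_first_def)
qed (simp add: hankel_def)

theorem lemma10:
  fixes x :: "nat \<Rightarrow> 'a::field" and N p p' :: nat
  assumes "p + p' \<le> N + 1"
    and "hrank (p + 1) (hankel (p + 1) p' x) > p"
  shows "hrank p (hankel p (p' + 1) x) = p"
  unfolding hrank_def
proof (rule vec_space.rank_eq_if_mult_mat_vec_surj)
  show "hankel p (p' + 1) x \<in> carrier_mat p (p' + 1)" by (simp add: hankel_def)
next
  fix v :: "'a vec" assume v: "v \<in> carrier_vec p"
  have A: "hankel (p + 1) p' x \<in> carrier_mat (p + 1) p'" by (simp add: hankel_def)
  have rank_A: "p + 1 \<le> vec_space.rank (p + 1) (hankel (p + 1) p' x)"
    using assms(2) unfolding hrank_def by simp
  have "v @\<^sub>v 0\<^sub>v 1 \<in> carrier_vec (p + 1)" using v by (intro append_carrier_vec) auto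
  then obtain c where c: "c \<in> carrier_vec p'"
    and Ac: "hankel (p + 1) p' x *\<^sub>v c = v @\<^sub>v 0\<^sub>v 1"
    by (rule vec_space.mult_mat_vec_surj_if_rank_ge[OF A rank_A])
  have "hankel p (p' + 1) x *\<^sub>v (c @\<^sub>v 0\<^sub>v 1) = vec_first (v @\<^sub>v 0\<^sub>v 1) p"
    by (simp only: hankel_mult_zero_padded[OF c] Ac)
  also have "\<dots> = v"
    using v by (intro eq_vecI) (auto simp: vec_first_def)
  finally show "\<exists>d \<in> carrier_vec (p' + 1). hankel p (p' + 1) x *\<^sub>v d = v"
    using c by (metis append_carrier_vec zero_carrier_vec)
qed

end
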